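(* Let $f : \mathbb{R}^{n_1} \times \mathbb{R}^{n_2} \to \mathbb{R}^{n_3}$, $(u,v) \mapsto u * v$, be a bilinear map. Then $Q(f)$ equals the maximal $r$ for which there exist $u_1,\ldots,u_r \in \mathbb{R}^{n_1}$ and $v_1,\ldots,v_r \in \mathbb{R}^{n_2}$ such that $u_1 * v_1, \ldots, u_r * v_r$ are linearly independent modulo the subspace $\langle \{ u_i * v_j \mid 1 \leq i,j \leq r,\ i \neq j\} \rangle_{\mathbb{R}}$.
   Context: For a bilinear map $f : \mathbb{R}^{n_1} \times \mathbb{R}^{n_2} \to \mathbb{R}^{n_3}$, its subrank $Q(f)$ is the largest $r$ such that there exist linear maps $\varphi_1 : \mathbb{R}^r \to \mathbb{R}^{n_1}$, $\varphi_2 : \mathbb{R}^r \to \mathbb{R}^{n_2}$, $\varphi_3 : \mathbb{R}^{n_3} \to \mathbb{R}^r$ with $\varphi_3(f(\varphi_1(a), \varphi_2(b))) = (a_1b_1,\ldots,a_rb_r)$ for all $a,b \in \mathbb{R}^r$. *)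

theory Defs
  imports "HOL-Analysis.Analysis"
begin

text \<open>Vectors of \<open>\<real>^r\<close> (r varies) are represented as \<open>a :: nat \<Rightarrow> real\<close>, only
  the coordinates \<open>a 0, ..., a (r-1)\<close> being relevant.  A linear map
  \<open>\<real>^r \<rightarrow> V\<close> is given by the images \<open>w 0, ..., w (r-1)\<close> of the standard basis,
  i.e. \<open>a \<mapsto> \<Sum>i<r. a i *\<^sub>R w i\<close>; a linear map \<open>V \<rightarrow> \<real>^r\<close> is given by its
  r linear coordinate functionals \<open>l 0, ..., l (r-1)\<close>.\<close>

definition subrank_witness ::
  "('a::real_vector \<Rightarrow> 'b::real_vector \<Rightarrow> 'c::real_vector) \<Rightarrow> nat \<Rightarrow> bool" where
  "subrank_witness f r \<longleftrightarrow>
     (\<exists>(w1 :: nat \<Rightarrow> 'a) (w2 :: nat \<Rightarrow> 'b) (l :: nat \<Rightarrow> 'c \<Rightarrow> real).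
        (\<forall>k<r. linear (l k)) \<and>
        (\<forall>(a :: nat \<Rightarrow> real) (b :: nat \<Rightarrow> real). \<forall>k<r.
           l k (f (\<Sum>i<r. a i *\<^sub>R w1 i) (\<Sum>j<r. b j *\<^sub>R w2 j)) = a k * b k))"

definition subrank ::
  "('a::real_vector \<Rightarrow> 'b::real_vector \<Rightarrow> 'c::real_vector) \<Rightarrow> nat" where
  "subrank f = (GREATEST r. subrank_witness f r)"

definition lin_indep_modulo :: "nat \<Rightarrow> (nat \<Rightarrow> 'c::real_vector) \<Rightarrow> 'c set \<Rightarrow> bool" where
  "lin_indep_modulo r x W \<longleftrightarrow>
     (\<forall>c :: nat \<Rightarrow> real. (\<Sum>i<r. c i *\<^sub>R x i) \<in> W \<longrightarrow> (\<forall>i<r. c i = 0))"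

definition diag_indep ::
  "('a::real_vector \<Rightarrow> 'b::real_vector \<Rightarrow> 'c::real_vector) \<Rightarrow> nat \<Rightarrow> bool" where
  "diag_indep f r \<longleftrightarrow>
     (\<exists>(u :: nat \<Rightarrow> 'a) (v :: nat \<Rightarrow> 'b).
        lin_indep_modulo r (\<lambda>i. f (u i) (v i))
          (span {f (u i) (v j) | i j. i < r \<and> j < r \<and> i \<noteq> j}))"

end

theory Submission
  imports Defs
begin

(* A subrank witness of size r amounts to vectors u i, v j and linear functionals l k with
   l k (f (u i) (v j)) = 1 if i = j = k and 0 otherwise: evaluate the witness identity at
   standard basis vectors, and conversely expand f bilinearly.  Such functionals exist iff the
   diagonal products x k = f (u k) (v k) are linearly independent modulo the span of the set W
   of off-diagonal products, because independence says exactly that no x k lies in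
   span (W \<union> {x i | i \<noteq> k}), and a vector outside a span is sent to 1 by some linear
   functional vanishing on that span. *)

lemma bilinear_sum_scaleR:
  assumes "bilinear f"
  shows "f (\<Sum>i\<in>A. a i *\<^sub>R u i) (\<Sum>j\<in>B. b j *\<^sub>R v j)
       = (\<Sum>i\<in>A. \<Sum>j\<in>B. (a i * b j) *\<^sub>R f (u i) (v j))"
  by (simp add: bilinear_sum[OF assms] sum.cartesian_product bilinear_lmul[OF assms]
      bilinear_rmul[OF assms] mult.commute)

lemma sum_delta_scaleR:
  fixes w :: "'i \<Rightarrow> 'a::real_vector"
  assumes "finite A" "j \<in> A"
  shows "(\<Sum>i\<in>A. (if i = j then 1 else 0) *\<^sub>R w i) = w j"
  using assms by (simp add: if_distrib[of "\<lambda>c. c *\<^sub>R _"] cong: if_cong)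

lemma span_separating_functional:
  fixes x :: "'a::real_vector"
  assumes "x \<notin> span S"
  obtains g :: "'a \<Rightarrow> real" where "linear g" "g x = 1" "\<And>y. y \<in> span S \<Longrightarrow> g y = 0"
proof -
  obtain B where B: "B \<subseteq> span S" "independent B" "span S \<subseteq> span B"
    using maximal_independent_subset by blast
  have "x \<notin> span B"
    using assms span_minimal[OF B(1) subspace_span] by blast
  then have "independent (insert x B)"
    using B(2) by (rule independent_insertI)
  then obtain g :: "'a \<Rightarrow> real"
    where g: "linear g" "\<forall>z\<in>insert x B. g z = (if z = x then 1 else 0)"
    using linear_independent_extend[where f = "\<lambda>z. if z = x then 1 else 0"] by blast
  have "g y = 0" if "y \<in> span B" for y
    using linear_eq_0_on_span[OF g(1) _ that] g(2) \<open>x \<notin> span B\<close> span_base by fastforce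
  with g B(3) show ?thesis
    by (intro that[of g]) auto
qed

lemma in_span_Un_imageE:
  fixes x :: "'i \<Rightarrow> 'a::real_vector"
  assumes "y \<in> span (W \<union> x ` I)" "finite I"
  obtains d where "y - (\<Sum>i\<in>I. d i *\<^sub>R x i) \<in> span W"
proof -
  from assms(1) have "\<exists>d. y - (\<Sum>i\<in>I. d i *\<^sub>R x i) \<in> span W"
  proof (induction rule: span_induct_alt)
    case base
    show ?case
      by (intro exI[of _ "\<lambda>_. 0"]) (simp add: span_zero)
  next
    case (step c z v)
    then obtain d where d: "v - (\<Sum>i\<in>I. d i *\<^sub>R x i) \<in> span W"
      by blast
    from step.hyps consider "z \<in> W" | j where "j \<in> I" "z = x j"
      by blast
    then show ?case
    proof cases
      case 1
      then have "c *\<^sub>R z + (v - (\<Sum>i\<in>I. d i *\<^sub>R x i)) \<in> span W"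
        using d by (simp add: span_add span_scale span_base)
      then show ?thesis
        by (intro exI[of _ d]) (simp add: algebra_simps)
    next
      case (2 j)
      then have "(\<Sum>i\<in>I. (d i + (if i = j then c else 0)) *\<^sub>R x i)
                 = (\<Sum>i\<in>I. d i *\<^sub>R x i) + c *\<^sub>R z"
        using assms(2)
        by (simp add: scaleR_add_left sum.distrib if_distrib[of "\<lambda>a. a *\<^sub>R _"] cong: if_cong)
      then show ?thesis
        using d by (intro exI[of _ "\<lambda>i. d i + (if i = j then c else 0)"]) (simp add: algebra_simps)
    qed
  qed
  with that show ?thesis
    by blast
qed

lemma lin_indep_modulo_not_in_span:
  assumes "lin_indep_modulo r x (span W)" "k < r"
  shows "x k \<notin> span (W \<union> x ` ({..<r} - {k}))"
proof
  assume "x k \<in> span (W \<union> x ` ({..<r} - {k}))"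
  then obtain d where d: "x k - (\<Sum>i\<in>{..<r} - {k}. d i *\<^sub>R x i) \<in> span W"
    by (rule in_span_Un_imageE) simp
  define c where "c i = (if i = k then 1 else - d i)" for i
  have "(\<Sum>i<r. c i *\<^sub>R x i) = c k *\<^sub>R x k + (\<Sum>i\<in>{..<r} - {k}. c i *\<^sub>R x i)"
    using assms(2) by (simp add: sum.remove)
  also have "\<dots> = x k - (\<Sum>i\<in>{..<r} - {k}. d i *\<^sub>R x i)"
    by (simp add: c_def sum_negf)
  finally have "c k = 0"
    using assms d unfolding lin_indep_modulo_def by metis
  then show False
    by (simp add: c_def)
qed

lemma lin_indep_modulo_span_iff:
  fixes x :: "nat \<Rightarrow> 'a::real_vector"
  shows "lin_indep_modulo r x (span W) \<longleftrightarrow>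
    (\<exists>l :: nat \<Rightarrow> 'a \<Rightarrow> real. \<forall>k<r. linear (l k) \<and>
       (\<forall>i<r. l k (x i) = (if i = k then 1 else 0)) \<and> (\<forall>w\<in>W. l k w = 0))"
  (is "_ \<longleftrightarrow> ?dual_family")
proof
  assume indep: "lin_indep_modulo r x (span W)"
  have functional_k: "\<forall>k. \<exists>g :: 'a \<Rightarrow> real. k < r \<longrightarrow>
          linear g \<and> (\<forall>i<r. g (x i) = (if i = k then 1 else 0)) \<and> (\<forall>w\<in>W. g w = 0)"
  proof (intro allI)
    fix k
    show "\<exists>g :: 'a \<Rightarrow> real. k < r \<longrightarrow>
            linear g \<and> (\<forall>i<r. g (x i) = (if i = k then 1 else 0)) \<and> (\<forall>w\<in>W. g w = 0)"
    proof (cases "k < r")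
      case True
      obtain g :: "'a \<Rightarrow> real" where g: "linear g" "g (x k) = 1"
        "\<And>y. y \<in> span (W \<union> x ` ({..<r} - {k})) \<Longrightarrow> g y = 0"
        using span_separating_functional[OF lin_indep_modulo_not_in_span[OF indep True]] by blast
      have "g (x i) = 0" if "i < r" "i \<noteq> k" for i
        using that by (intro g(3) span_base) simp
      moreover have "g w = 0" if "w \<in> W" for w
        using that by (intro g(3) span_base) simp
      ultimately show ?thesis
        using g(1,2) by (intro exI[of _ g]) simp
    qed simp
  qed
  from choice[OF functional_k] show ?dual_family .
next
  assume ?dual_family
  then obtain l :: "nat \<Rightarrow> 'a \<Rightarrow> real" where l: "\<And>k. k < r \<Longrightarrow> linear (l k)"
    "\<And>k i. k < r \<Longrightarrow> i < r \<Longrightarrow> l k (x i) = (if i = k then 1 else 0)"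
    "\<And>k w. k < r \<Longrightarrow> w \<in> W \<Longrightarrow> l k w = 0"
    by blast
  show "lin_indep_modulo r x (span W)"
    unfolding lin_indep_modulo_def
  proof (intro allI impI)
    fix c k
    assume sum_in: "(\<Sum>i<r. c i *\<^sub>R x i) \<in> span W" and k: "k < r"
    have "l k (\<Sum>i<r. c i *\<^sub>R x i) = c k"
      using k l(2)[OF k]
      by (simp add: linear_sum[OF l(1)[OF k]] linear_scale[OF l(1)[OF k]]
          if_distrib[of "\<lambda>a. _ * a"] cong: if_cong)
    moreover have "l k (\<Sum>i<r. c i *\<^sub>R x i) = 0"
      using linear_eq_0_on_span[OF l(1)[OF k] l(3)[OF k] sum_in] .
    ultimately show "c k = 0"
      by simp
  qed
qed

definition diag_functionals ::
  "('a::real_vector \<Rightarrow> 'b::real_vector \<Rightarrow> 'c::real_vector) \<Rightarrow> nat \<Rightarrow>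
     (nat \<Rightarrow> 'a) \<Rightarrow> (nat \<Rightarrow> 'b) \<Rightarrow> (nat \<Rightarrow> 'c \<Rightarrow> real) \<Rightarrow> bool" where
  "diag_functionals f r u v l \<longleftrightarrow>
     (\<forall>k<r. linear (l k) \<and>
        (\<forall>i<r. \<forall>j<r. l k (f (u i) (v j)) = (if i = k \<and> j = k then 1 else 0)))"

lemma subrank_witness_iff_diag_functionals:
  assumes "bilinear f"
  shows "subrank_witness f r \<longleftrightarrow> (\<exists>u v l. diag_functionals f r u v l)"
proof
  assume "subrank_witness f r"
  then obtain u v l where lin: "\<forall>k<r. linear (l k)" and
    eval: "\<forall>a b. \<forall>k<r. l k (f (\<Sum>i<r. a i *\<^sub>R u i) (\<Sum>j<r. b j *\<^sub>R v j)) = a k * b k"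
    unfolding subrank_witness_def by blast
  have "l k (f (u i) (v j)) = (if i = k \<and> j = k then 1 else 0)"
    if "k < r" "i < r" "j < r" for k i j
    using eval[rule_format, of k "\<lambda>i'. if i' = i then 1 else 0" "\<lambda>j'. if j' = j then 1 else 0"] that
    by (simp add: sum_delta_scaleR)
  with lin show "\<exists>u v l. diag_functionals f r u v l"
    unfolding diag_functionals_def by blast
next
  assume "\<exists>u v l. diag_functionals f r u v l"
  then obtain u v l where "diag_functionals f r u v l"
    by blast
  then have lin: "\<And>k. k < r \<Longrightarrow> linear (l k)" and
    delta: "\<And>k i j. \<lbrakk>k < r; i < r; j < r\<rbrakk> \<Longrightarrow>
              l k (f (u i) (v j)) = (if i = k \<and> j = k then 1 else 0)"
    unfolding diag_functionals_def by simp_all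
  have "l k (f (\<Sum>i<r. a i *\<^sub>R u i) (\<Sum>j<r. b j *\<^sub>R v j)) = a k * b k"
    if k: "k < r" for a b k
  proof -
    have "l k (f (\<Sum>i<r. a i *\<^sub>R u i) (\<Sum>j<r. b j *\<^sub>R v j))
          = (\<Sum>i<r. \<Sum>j<r. (a i * b j) * l k (f (u i) (v j)))"
      by (simp add: bilinear_sum_scaleR[OF assms] linear_sum[OF lin[OF k]]
          linear_scale[OF lin[OF k]])
    also have "\<dots> = a k * b k"
      using k by (simp add: delta if_distrib[of "\<lambda>c. _ * c"] sum.delta' sum.swap[of _ "{..<r}"]
          cong: if_cong flip: if_if_eq_conj)
    finally show ?thesis .
  qed
  with lin show "subrank_witness f r"
    unfolding subrank_witness_def by blast
qed

lemma diag_indep_iff_diag_functionals: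
  "diag_indep f r \<longleftrightarrow> (\<exists>u v l. diag_functionals f r u v l)"
proof -
  have pointwise: "(\<forall>i<r. g (f (u i) (v i)) = (if i = k then 1 else 0)) \<and>
        (\<forall>w\<in>{f (u i) (v j) |i j. i < r \<and> j < r \<and> i \<noteq> j}. g w = 0)
    \<longleftrightarrow> (\<forall>i<r. \<forall>j<r. g (f (u i) (v j)) = (if i = k \<and> j = k then 1 else 0))"
    for g :: "'c::real_vector \<Rightarrow> real" and u v k
    by fastforce
  show ?thesis
    by (simp only: diag_indep_def lin_indep_modulo_span_iff diag_functionals_def pointwise)
qed

theorem proposition5p1:
  fixes f :: "real ^ 'n1 \<Rightarrow> real ^ 'n2 \<Rightarrow> real ^ 'n3"
  assumes "bilinear f"
  shows "subrank f = (GREATEST r. diag_indep f r)"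
proof -
  have "subrank_witness f = diag_indep f"
    by (intro ext) (simp add: subrank_witness_iff_diag_functionals[OF assms]
        diag_indep_iff_diag_functionals)
  then show ?thesis
    unfolding subrank_def by simp
qed

end
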